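(* Let $M\ge2$ be an integer and consider the class of random variables $X$ whose distribution is unimodal with support contained in $\{1,\dots,M\}$. Within this class, $\nu_1(X)\le\frac{M-1}{4}$, and equality holds if and only if $X$ is uniformly distributed on $\{1,\dots,M\}$.
   Context: For a real random variable $X$, its Lévy concentration function is $Q_X(\varepsilon)=\sup_{x_0\in\mathbb{R}}\Pr\{X\in[x_0,x_0+\varepsilon]\}$, $\varepsilon>0$, and $Q_X(0):=\lim_{\varepsilon\downarrow0}Q_X(\varepsilon)=\max_k\Pr(X=k)$. For integer-valued $X$, $\nu_1(X)=\frac12\int_0^\infty(1-Q_X(\varepsilon))\,d\varepsilon=\frac12\sum_{k=0}^\infty(1-Q_X(k))$. A distribution $p$ on the integers is unimodal if there exists an integer $m$ with $p_k\ge p_{k-1}$ for all $k\le m$ and $p_{k+1}\le p_k$ for all $k\ge m$. *)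

theory Defs
  imports "HOL-Probability.Probability"
begin

text \<open>An integer-valued random variable is represented by its distribution, an int pmf.\<close>

definition levy_conc :: "int pmf \<Rightarrow> real \<Rightarrow> real" where
  "levy_conc p \<epsilon> =
     (SUP x0::real. measure_pmf.prob p {k. x0 \<le> real_of_int k \<and> real_of_int k \<le> x0 + \<epsilon>})"

definition nu1 :: "int pmf \<Rightarrow> real" where
  "nu1 p = (1/2) * integral {0..} (\<lambda>\<epsilon>. 1 - levy_conc p \<epsilon>)"

definition unimodal_pmf :: "int pmf \<Rightarrow> bool" where
  "unimodal_pmf p \<longleftrightarrow> (\<exists>m::int.
      (\<forall>k. k \<le> m \<longrightarrow> pmf p k \<ge> pmf p (k - 1)) \<and>
      (\<forall>k. k \<ge> m \<longrightarrow> pmf p (k + 1) \<le> pmf p k))"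

end

theory Submission
  imports Defs
begin

text \<open>A window \<open>[x0, x0 + n]\<close> contains at most n + 1 consecutive integers, so Q(n) is
  the largest mass of n + 1 consecutive integers; hence Q(n) = 1 once n \<ge> M - 1 and
  nu1 is half the sum of 1 - Q(n) over n < M - 1. For a unimodal distribution on {1..M} the n + 1
  largest point masses can be chosen on consecutive integers, and the n + 1 largest of M
  masses carry at least (n + 1)/M of the total. So Q(n) \<ge> (n + 1)/M, and summing gives
  2 nu1 \<le> (M - 1) - M(M - 1)/(2M) = (M - 1)/2. Equality forces Q(0) = 1/M, i.e.
  every point mass is at most 1/M, which only the uniform distribution achieves;
  conversely the uniform distribution has Q(n) \<le> (n + 1)/M.\<close>

lemma levy_conc_bdd_above:
  "bdd_above (range (\<lambda>x0::real. measure_pmf.prob p {k. x0 \<le> real_of_int k \<and> real_of_int k \<le> x0 + e}))"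
  by (rule bdd_aboveI2[where M = 1]) (rule measure_pmf.prob_le_1)

lemma levy_conc_le_1: "levy_conc p e \<le> 1"
  unfolding levy_conc_def by (rule cSUP_least) (auto intro: measure_pmf.prob_le_1)

lemma window_subset_int_interval:
  "{k::int. x0 \<le> real_of_int k \<and> real_of_int k \<le> x0 + e} \<subseteq> {\<lceil>x0\<rceil>..\<lceil>x0\<rceil> + \<lfloor>e\<rfloor>}"
proof
  fix k assume "k \<in> {k::int. x0 \<le> real_of_int k \<and> real_of_int k \<le> x0 + e}"
  then have "x0 \<le> real_of_int k" "real_of_int (k - \<lceil>x0\<rceil>) \<le> e"
    using le_of_int_ceiling[of x0] by auto linarith
  then have "\<lceil>x0\<rceil> \<le> k" "k - \<lceil>x0\<rceil> \<le> \<lfloor>e\<rfloor>"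
    by (simp_all only: ceiling_le le_floor_iff)
  then show "k \<in> {\<lceil>x0\<rceil>..\<lceil>x0\<rceil> + \<lfloor>e\<rfloor>}" by simp
qed

lemma levy_conc_le_if_intervals_le:
  assumes "\<And>a::int. measure_pmf.prob p {a..a + \<lfloor>e\<rfloor>} \<le> c"
  shows "levy_conc p e \<le> c"
  unfolding levy_conc_def
proof (rule cSUP_least)
  fix x0 :: real
  have "measure_pmf.prob p {k. x0 \<le> real_of_int k \<and> real_of_int k \<le> x0 + e}
      \<le> measure_pmf.prob p {\<lceil>x0\<rceil>..\<lceil>x0\<rceil> + \<lfloor>e\<rfloor>}"
    by (intro measure_pmf.finite_measure_mono window_subset_int_interval) simp
  also have "\<dots> \<le> c" by (rule assms)
  finally show "measure_pmf.prob p {k. x0 \<le> real_of_int k \<and> real_of_int k \<le> x0 + e} \<le> c" .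
qed simp

lemma interval_prob_le_levy_conc:
  assumes "0 \<le> e"
  shows "measure_pmf.prob p {a..a + \<lfloor>e\<rfloor>} \<le> levy_conc p e"
proof -
  have "{a..a + \<lfloor>e\<rfloor>} \<subseteq> {k. real_of_int a \<le> real_of_int k \<and> real_of_int k \<le> real_of_int a + e}"
    by auto linarith
  then have "measure_pmf.prob p {a..a + \<lfloor>e\<rfloor>}
      \<le> measure_pmf.prob p {k. real_of_int a \<le> real_of_int k \<and> real_of_int k \<le> real_of_int a + e}"
    by (intro measure_pmf.finite_measure_mono) simp_all
  also have "\<dots> \<le> levy_conc p e"
    unfolding levy_conc_def by (rule cSUP_upper[OF _ levy_conc_bdd_above]) simp
  finally show ?thesis .
qed

lemma levy_conc_floor:
  assumes "0 \<le> e"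
  shows "levy_conc p e = levy_conc p (real (nat \<lfloor>e\<rfloor>))"
proof -
  have floor_eq: "\<lfloor>real (nat \<lfloor>e\<rfloor>)\<rfloor> = \<lfloor>e\<rfloor>" using assms by simp
  show ?thesis
  proof (rule antisym)
    show "levy_conc p e \<le> levy_conc p (real (nat \<lfloor>e\<rfloor>))"
      using interval_prob_le_levy_conc[of "real (nat \<lfloor>e\<rfloor>)" p]
      by (intro levy_conc_le_if_intervals_le) (simp only: floor_eq)
    show "levy_conc p (real (nat \<lfloor>e\<rfloor>)) \<le> levy_conc p e"
      using interval_prob_le_levy_conc[OF assms, of p]
      by (intro levy_conc_le_if_intervals_le) (simp only: floor_eq)
  qed
qed

lemma levy_conc_eq_1:
  assumes "0 \<le> e" and "set_pmf p \<subseteq> {a..a + \<lfloor>e\<rfloor>}"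
  shows "levy_conc p e = 1"
proof (rule antisym[OF levy_conc_le_1])
  have "measure_pmf.prob p {a..a + \<lfloor>e\<rfloor>} = 1"
    using assms(2) by (subst measure_pmf.prob_eq_1) (auto simp: AE_measure_pmf_iff)
  then show "1 \<le> levy_conc p e"
    using interval_prob_le_levy_conc[OF assms(1)] by metis
qed

lemma has_integral_levy_conc_unit:
  "((\<lambda>e. 1 - levy_conc p e) has_integral (1 - levy_conc p (real n))) {real n..real n + 1}"
proof (rule has_integral_spike_finite)
  show "((\<lambda>e. 1 - levy_conc p (real n)) has_integral (1 - levy_conc p (real n))) {real n..real n + 1}"
    using has_integral_const_real[of "1 - levy_conc p (real n)" "real n" "real n + 1"] by simp
  fix e assume "e \<in> {real n..real n + 1} - {real n + 1}"
  then have "nat \<lfloor>e\<rfloor> = n" "0 \<le> e" by (auto intro!: floor_unique simp: nat_eq_iff)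
  then show "1 - levy_conc p e = 1 - levy_conc p (real n)" using levy_conc_floor by metis
qed simp

lemma has_integral_levy_conc_upto:
  "((\<lambda>e. 1 - levy_conc p e) has_integral (\<Sum>n<N. 1 - levy_conc p (real n))) {0..real N}"
proof (induction N)
  case 0
  show ?case using has_integral_refl(2)[of _ "0::real"] by simp
next
  case (Suc N)
  show ?case
    using has_integral_combine[OF _ _ Suc.IH has_integral_levy_conc_unit[of p N]] by (simp add: add.commute)
qed

lemma nu1_eq_sum:
  assumes "set_pmf p \<subseteq> {a..a + int N}"
  shows "nu1 p = (\<Sum>n<N. 1 - levy_conc p (real n)) / 2"
proof -
  have vanish: "1 - levy_conc p e = 0" if "e \<in> {0..} - {0..real N}" for e
  proof -
    have "real N \<le> e" using that by auto
    then have "int N \<le> \<lfloor>e\<rfloor>" by (simp add: le_floor_iff)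
    then have "set_pmf p \<subseteq> {a..a + \<lfloor>e\<rfloor>}"
      by (intro order_trans[OF assms]) auto
    then show ?thesis using that levy_conc_eq_1 by simp
  qed
  have "(\<lambda>e. if e \<in> {0..real N} then 1 - levy_conc p e else 0)
      = (\<lambda>e. if e \<in> {0..} then 1 - levy_conc p e else 0)"
  proof (rule ext)
    fix e
    show "(if e \<in> {0..real N} then 1 - levy_conc p e else 0)
        = (if e \<in> {0..} then 1 - levy_conc p e else 0)"
      using vanish[of e] by (cases "e \<in> {0..real N}") auto
  qed
  moreover have "((\<lambda>e. if e \<in> {0..real N} then 1 - levy_conc p e else 0)
      has_integral (\<Sum>n<N. 1 - levy_conc p (real n))) UNIV"
    using has_integral_levy_conc_upto[of p N] by (simp only: has_integral_restrict_UNIV)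
  ultimately have "((\<lambda>e. 1 - levy_conc p e) has_integral (\<Sum>n<N. 1 - levy_conc p (real n))) {0..}"
    by (simp only: has_integral_restrict_UNIV)
  then show ?thesis unfolding nu1_def by (simp add: integral_unique)
qed

definition is_top_set :: "('a \<Rightarrow> 'b::order) \<Rightarrow> 'a set \<Rightarrow> 'a set \<Rightarrow> bool" where
  "is_top_set f S I \<longleftrightarrow> I \<subseteq> S \<and> (\<forall>k\<in>I. \<forall>j\<in>S - I. f j \<le> f k)"

lemma is_top_set_insert:
  assumes "is_top_set f S I" and "x \<in> S" and "\<And>j. j \<in> S - I \<Longrightarrow> f j \<le> f x"
  shows "is_top_set f S (insert x I)"
  using assms unfolding is_top_set_def by auto

lemma card_mult_sum_le_of_top_set:
  fixes f :: "'a \<Rightarrow> real"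
  assumes "finite S" and "is_top_set f S I"
  shows "real (card I) * sum f S \<le> real (card S) * sum f I"
proof -
  have I: "I \<subseteq> S" "finite I" and top: "\<And>k j. k \<in> I \<Longrightarrow> j \<in> S - I \<Longrightarrow> f j \<le> f k"
    using assms unfolding is_top_set_def by (auto intro: finite_subset)
  have "real (card I) * sum f (S - I) = (\<Sum>k\<in>I. \<Sum>j\<in>S - I. f j)"
    by simp
  also have "\<dots> \<le> (\<Sum>k\<in>I. \<Sum>j\<in>S - I. f k)"
    by (intro sum_mono top)
  also have "\<dots> = real (card (S - I)) * sum f I"
    by (simp add: sum_distrib_left)
  finally have "real (card I) * sum f (S - I) \<le> real (card (S - I)) * sum f I" .
  moreover have "sum f S = sum f I + sum f (S - I)"
    using I assms(1) by (metis sum.subset_diff add.commute)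
  moreover have "real (card S) = real (card I) + real (card (S - I))"
    using I assms(1) by (simp add: card_Diff_subset card_mono)
  ultimately show ?thesis by (simp add: algebra_simps)
qed

text \<open>The top set of a unimodal function can be grown one point at a time, always by the
  larger of the two neighbours of the current interval, keeping the mode inside.\<close>

lemma unimodal_top_interval:
  fixes f :: "int \<Rightarrow> 'b::linorder"
  assumes "lo \<le> m" "m \<le> hi" and up: "mono_on {lo..m} f" and down: "antimono_on {m..hi} f"
    and "lo + int d \<le> hi"
  shows "\<exists>a. lo \<le> a \<and> a + int d \<le> hi \<and> a \<le> m \<and> m \<le> a + int d
           \<and> is_top_set f {lo..hi} {a..a + int d}"
  using assms(5)
proof (induction d)
  case 0
  have "f j \<le> f m" if "j \<in> {lo..hi}" for j
  proof (cases "j \<le> m")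
    case True
    then show ?thesis using that assms(1,2) by (auto intro: mono_onD[OF up])
  next
    case False
    then show ?thesis using that assms(1,2) by (auto intro: monotone_onD[OF down])
  qed
  then have "is_top_set f {lo..hi} {m..m}"
    unfolding is_top_set_def using assms(1,2) by auto
  then show ?case using assms(1,2) by auto
next
  case (Suc d)
  then obtain a where a: "lo \<le> a" "a + int d \<le> hi" "a \<le> m" "m \<le> a + int d"
    and top: "is_top_set f {lo..hi} {a..a + int d}"
    by auto
  define b where "b = a + int d"
  show ?case
  proof (cases "lo < a \<and> (b = hi \<or> f (b + 1) \<le> f (a - 1))")
    case True
    have "f j \<le> f (a - 1)" if "j \<in> {lo..hi} - {a..b}" for j
    proof (cases "j < a")
      case True
      then show ?thesis using that a by (auto intro: mono_onD[OF up])
    next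
      case False
      then have "b + 1 \<le> j" "j \<le> hi" "b \<noteq> hi" using that by auto
      then have "f j \<le> f (b + 1)" using a by (auto simp: b_def intro: monotone_onD[OF down])
      also have "\<dots> \<le> f (a - 1)" using True \<open>b \<noteq> hi\<close> by auto
      finally show ?thesis .
    qed
    then have "is_top_set f {lo..hi} (insert (a - 1) {a..b})"
      using True a by (intro is_top_set_insert[OF top[folded b_def]]) auto
    moreover have "insert (a - 1) {a..b} = {a - 1..a - 1 + int (Suc d)}"
      by (auto simp: b_def)
    ultimately show ?thesis using True a by (intro exI[of _ "a - 1"]) (auto simp: b_def)
  next
    case False
    then have "b < hi" using Suc.prems a by (auto simp: b_def)
    have "f j \<le> f (b + 1)" if "j \<in> {lo..hi} - {a..b}" for j
    proof (cases "b < j")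
      case True
      then show ?thesis using that a by (auto simp: b_def intro: monotone_onD[OF down])
    next
      case False
      then have "lo \<le> j" "j \<le> a - 1" "lo < a" using that by auto
      then have "f j \<le> f (a - 1)" using a by (auto intro: mono_onD[OF up])
      also have "\<dots> \<le> f (b + 1)" using \<open>\<not> (lo < a \<and> _)\<close> \<open>lo < a\<close> \<open>b < hi\<close> by auto
      finally show ?thesis .
    qed
    then have "is_top_set f {lo..hi} (insert (b + 1) {a..b})"
      using \<open>b < hi\<close> a by (intro is_top_set_insert[OF top[folded b_def]]) (auto simp: b_def)
    moreover have "insert (b + 1) {a..b} = {a..a + int (Suc d)}"
      by (auto simp: b_def)
    ultimately show ?thesis using \<open>b < hi\<close> a by (intro exI[of _ a]) (auto simp: b_def)
  qed
qed

lemma mono_on_atMost_int_step: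
  fixes f :: "int \<Rightarrow> 'a::order"
  assumes step: "\<And>k. k \<le> m \<Longrightarrow> f (k - 1) \<le> f k"
  shows "mono_on {..m} f"
proof (rule mono_onI)
  fix i j :: int assume "i \<in> {..m}" "j \<in> {..m}" "i \<le> j"
  have "j \<le> m \<longrightarrow> f i \<le> f j" using \<open>i \<le> j\<close>
  proof (induction j rule: int_ge_induct)
    case (step j)
    then show ?case using assms[of "j + 1"] by (auto intro: order_trans)
  qed simp
  then show "f i \<le> f j" using \<open>j \<in> {..m}\<close> by simp
qed

lemma antimono_on_atLeast_int_step:
  fixes f :: "int \<Rightarrow> 'a::order"
  assumes step: "\<And>k. m \<le> k \<Longrightarrow> f (k + 1) \<le> f k"
  shows "antimono_on {m..} f"
proof (rule monotone_onI)
  fix i j :: int assume "i \<in> {m..}" "j \<in> {m..}" "i \<le> j"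
  from \<open>i \<le> j\<close> have "f j \<le> f i"
  proof (induction j rule: int_ge_induct)
    case (step j)
    then show ?case using assms[of j] \<open>i \<in> {m..}\<close> by (auto intro: order_trans)
  qed simp
  then show "f j \<le> f i" .
qed

lemma unimodal_pmf_mode_within:
  assumes "unimodal_pmf p" and "lo \<le> hi"
  obtains m where "lo \<le> m" "m \<le> hi" "mono_on {lo..m} (pmf p)" "antimono_on {m..hi} (pmf p)"
proof -
  obtain m0 where up: "mono_on {..m0} (pmf p)" and down: "antimono_on {m0..} (pmf p)"
    using assms(1) mono_on_atMost_int_step antimono_on_atLeast_int_step
    unfolding unimodal_pmf_def by metis
  define m where "m = max lo (min hi m0)"
  have "mono_on {lo..m} (pmf p)"
  proof (cases "m = lo")
    case False
    then have "{lo..m} \<subseteq> {..m0}" unfolding m_def by auto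
    then show ?thesis using monotone_on_subset[OF up] by blast
  qed (simp add: monotone_on_def)
  moreover have "antimono_on {m..hi} (pmf p)"
  proof (cases "m = hi")
    case False
    then have "{m..hi} \<subseteq> {m0..}" unfolding m_def by auto
    then show ?thesis using monotone_on_subset[OF down] by blast
  qed (simp add: monotone_on_def)
  moreover have "lo \<le> m" "m \<le> hi" using assms(2) unfolding m_def by auto
  ultimately show ?thesis using that by blast
qed

lemma levy_conc_unimodal_ge:
  assumes "unimodal_pmf p" and "set_pmf p \<subseteq> {1..M}" and "int n < M"
  shows "real (n + 1) / real_of_int M \<le> levy_conc p (real n)"
proof -
  obtain m where "1 \<le> m" "m \<le> M" "mono_on {1..m} (pmf p)" "antimono_on {m..M} (pmf p)"
    using unimodal_pmf_mode_within[OF assms(1), of 1 M] assms(3) by auto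
  then obtain a where top: "is_top_set (pmf p) {1..M} {a..a + int n}"
    using unimodal_top_interval[of 1 m M "pmf p" n] assms(3) by auto
  have "real (card {a..a + int n}) * sum (pmf p) {1..M}
      \<le> real (card {1..M}) * sum (pmf p) {a..a + int n}"
    by (rule card_mult_sum_le_of_top_set[OF _ top]) simp
  then have "real (n + 1) \<le> real_of_int M * measure_pmf.prob p {a..a + int n}"
    using sum_pmf_eq_1[OF _ assms(2)] assms(3) by (simp add: measure_measure_pmf_finite)
  then have "real (n + 1) / real_of_int M \<le> measure_pmf.prob p {a..a + int n}"
    using assms(3) by (simp add: divide_le_eq mult.commute)
  also have "\<dots> \<le> levy_conc p (real n)"
    using interval_prob_le_levy_conc[of "real n" p a] by simp
  finally show ?thesis .
qed

lemma levy_conc_pmf_of_set_le: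
  fixes S :: "int set"
  assumes "finite S" and "S \<noteq> {}"
  shows "levy_conc (pmf_of_set S) (real n) \<le> real (n + 1) / real (card S)"
proof (rule levy_conc_le_if_intervals_le)
  fix a :: int
  have "card (S \<inter> {a..a + int n}) \<le> card {a..a + int n}"
    by (intro card_mono) auto
  then show "measure_pmf.prob (pmf_of_set S) {a..a + \<lfloor>real n\<rfloor>} \<le> real (n + 1) / real (card S)"
    using assms by (simp add: measure_pmf_of_set divide_right_mono)
qed

lemma pmf_eq_pmf_of_set_if_le:
  assumes "finite S" and "set_pmf p \<subseteq> S" and le: "\<And>k. pmf p k \<le> 1 / real (card S)"
  shows "p = pmf_of_set S"
proof -
  have "S \<noteq> {}" using assms(2) set_pmf_not_empty[of p] by blast
  then have "(\<Sum>k\<in>S. 1 / real (card S) - pmf p k) = 0"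
    using assms(1) sum_pmf_eq_1[OF assms(1,2)] by (simp add: sum_subtractf)
  then have uniform: "\<forall>k\<in>S. pmf p k = 1 / real (card S)"
    using assms(1) le by (subst (asm) sum_nonneg_eq_0_iff) auto
  show ?thesis
  proof (rule pmf_eqI)
    fix k
    show "pmf p k = pmf (pmf_of_set S) k"
      using uniform assms(1,2) \<open>S \<noteq> {}\<close> by (cases "k \<in> S") (auto simp: set_pmf_iff)
  qed
qed

lemma sum_one_minus_ratio: "(\<Sum>n<N. 1 - real (n + 1) / real (N + 1)) = real N / 2"
proof -
  have gauss: "(\<Sum>n<N. real (n + 1)) = real N * (real N + 1) / 2"
    by (induction N) (auto simp: field_simps)
  show ?thesis
    unfolding sum_subtractf sum_divide_distrib[symmetric] gauss by (simp add: field_simps)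
qed

theorem mainTheorem16:
  fixes M :: int and p :: "int pmf"
  assumes "M \<ge> 2"
    and "unimodal_pmf p"
    and "set_pmf p \<subseteq> {1..M}"
  shows "nu1 p \<le> (real_of_int M - 1) / 4
         \<and> (nu1 p = (real_of_int M - 1) / 4 \<longleftrightarrow> p = pmf_of_set {1..M})"
proof -
  define N where "N = nat (M - 1)"
  have M: "M = int N + 1" "0 < N" using assms(1) unfolding N_def by auto
  let ?gap = "\<lambda>n. 1 - levy_conc p (real n)"
  let ?c = "\<lambda>n. 1 - real (n + 1) / real (N + 1)"
  have nu: "nu1 p = (\<Sum>n<N. ?gap n) / 2"
    using nu1_eq_sum[of p 1 N] assms(3) M by (simp add: add.commute)
  have le: "?gap n \<le> ?c n" if "n < N" for n
    using levy_conc_unimodal_ge[OF assms(2,3), of n] that M by (simp add: add.commute)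
  have "(\<Sum>n<N. ?gap n) \<le> (\<Sum>n<N. ?c n)" by (intro sum_mono le) simp
  then have bound: "nu1 p \<le> (real_of_int M - 1) / 4"
    using nu sum_one_minus_ratio[of N] M by simp
  have "p = pmf_of_set {1..M}" if "nu1 p = (real_of_int M - 1) / 4"
  proof -
    have "(\<Sum>n<N. ?gap n) = (\<Sum>n<N. ?c n)"
      using that nu sum_one_minus_ratio[of N] M by simp
    then have "?gap 0 = ?c 0" using sum_mono_inv[of ?gap "{..<N}" ?c 0] le M by simp
    then have "pmf p k \<le> 1 / real (card {1..M})" for k
      using interval_prob_le_levy_conc[of 0 p k] M by (simp add: measure_pmf_single add.commute)
    then show ?thesis using assms(3) by (intro pmf_eq_pmf_of_set_if_le) simp_all
  qed
  moreover have "nu1 p = (real_of_int M - 1) / 4" if "p = pmf_of_set {1..M}"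
  proof -
    have "?gap n = ?c n" if "n < N" for n
      using le[OF that] levy_conc_pmf_of_set_le[of "{1..M}" n] \<open>p = _\<close> M by (simp add: add.commute)
    then show ?thesis using nu sum_one_minus_ratio[of N] M by simp
  qed
  ultimately show ?thesis using bound by blast
qed

end
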